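(* Let $\mathcal M$ be a well-shaped tetrahedral mesh in $\mathbb R^3$ with parameter $\rho$, let $q$ be a point in $\mathcal M$, and let $p$ be a vertex of $\mathcal M$ nearest to $q$ among the vertices of $\mathcal M$. Let $\tau$ be the first tetrahedron of $\mathcal M$ intersected by the segment $pq$ when travelling from $p$ towards $q$ (so $p$ is a vertex of $\tau$), suppose $q$ is not in the interior of $\tau$, and let $p'$ be the intersection of $pq$ with the face of $\tau$ opposite to $p$. Then $|pp'|>\frac{6}{\rho^2+3}|pq|$.
   Context: A tetrahedral mesh is a subdivision of a region of $\mathbb R^3$ into tetrahedra, two tetrahedra being adjacent iff they share a face. It is well-shaped with parameter $\rho\ge3$ if every tetrahedron $t$ satisfies $R(t)/r(t)<\rho$, where $r(t)$ is the radius of the insphere and $R(t)$ the radius of the circumsphere of $t$. *)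

theory Defs
  imports "HOL-Analysis.Analysis"
begin

type_synonym point = "real^3"

text \<open>A tetrahedron is represented by its set of four affinely independent vertices;
  the solid tetrahedron is its convex hull.\<close>
definition tetrahedron :: "point set \<Rightarrow> bool" where
  "tetrahedron T \<longleftrightarrow> card T = 4 \<and> \<not> affine_dependent T"

definition tet_mesh :: "point set set \<Rightarrow> bool" where
  "tet_mesh M \<longleftrightarrow> finite M \<and> M \<noteq> {} \<and> (\<forall>T\<in>M. tetrahedron T) \<and>
     (\<forall>T\<in>M. \<forall>T'\<in>M. convex hull T \<inter> convex hull T' = convex hull (T \<inter> T'))"

definition mesh_region :: "point set set \<Rightarrow> point set" where
  "mesh_region M = (\<Union>T\<in>M. convex hull T)"

definition mesh_vertices :: "point set set \<Rightarrow> point set" where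
  "mesh_vertices M = \<Union>M"

definition inradius :: "point set \<Rightarrow> real" where
  "inradius T = Sup {r. \<exists>c. ball c r \<subseteq> convex hull T}"

definition circumradius :: "point set \<Rightarrow> real" where
  "circumradius T = (THE R. \<exists>c. \<forall>v\<in>T. dist c v = R)"

definition well_shaped :: "real \<Rightarrow> point set set \<Rightarrow> bool" where
  "well_shaped \<rho> M \<longleftrightarrow> tet_mesh M \<and> \<rho> \<ge> 3 \<and>
     (\<forall>T\<in>M. circumradius T / inradius T < \<rho>)"

end

theory Submission
  imports Defs
begin

text \<open>Write \<open>d = |pq|\<close>, \<open>t = |pp'|\<close>, and let \<open>c\<close>, \<open>R\<close>, \<open>r\<close> be circumcentre, circumradius and
  inradius of \<open>\<tau>\<close>. Every vertex \<open>v\<close> of the face opposite to \<open>p\<close> has \<open>|vq| \<ge> d\<close> (nearest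
  vertex) and \<open>|vc| = R\<close>; since \<open>x \<mapsto> |xq|\<^sup>2 - |xc|\<^sup>2\<close> is affine, the point \<open>p'\<close> of the face
  satisfies \<open>(d - t)\<^sup>2 \<ge> d\<^sup>2 - R\<^sup>2\<close>, i.e. \<open>2dt - t\<^sup>2 \<le> R\<^sup>2\<close>. The insphere fits into the slab
  between that face and the parallel plane through \<open>p\<close>, so \<open>2r \<le> t\<close>. With \<open>R < \<rho>r\<close> this gives
  \<open>t > 8d/(\<rho>\<^sup>2 + 4) \<ge> 6d/(\<rho>\<^sup>2 + 3)\<close>.\<close>

lemma tetrahedron_edges_span:
  assumes T: "tetrahedron T" and pT: "p \<in> T"
  shows "span ((\<lambda>v. v - p) ` (T - {p})) = UNIV"
proof -
  have ind: "\<not> affine_dependent T" and c4: "card T = 4" using T by (auto simp: tetrahedron_def)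
  have fin: "finite T" using c4 by (metis card.infinite zero_neq_numeral)
  have "\<not> dependent ((\<lambda>v. -p + v) ` (T - {p}))"
    using ind affine_dependent_iff_dependent[of p "T - {p}"] pT by (simp add: insert_absorb)
  moreover have "(\<lambda>v. -p + v) ` (T - {p}) = (\<lambda>v. v - p) ` (T - {p})" by simp
  ultimately have "\<not> dependent ((\<lambda>v. v - p) ` (T - {p}))" by simp
  moreover have "card ((\<lambda>v. v - p) ` (T - {p})) = 3"
    using c4 pT fin by (simp add: card_image inj_on_def)
  moreover have "finite ((\<lambda>v. v - p) ` (T - {p}))" using fin by simp
  ultimately show ?thesis using card_eq_dim[of "(\<lambda>v. v - p) ` (T - {p})" UNIV] by auto
qed

lemma orthogonal_tetrahedron_edges_eq_0:
  assumes T: "tetrahedron T" and pT: "p \<in> T"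
    and orth: "\<And>v. v \<in> T \<Longrightarrow> z \<bullet> (v - p) = 0"
  shows "z = 0"
proof -
  have "orthogonal z y" if "y \<in> (\<lambda>v. v - p) ` (T - {p})" for y
    using that orth by (auto simp: orthogonal_def)
  then have "orthogonal z z" using orthogonal_to_span tetrahedron_edges_span[OF T pT] by blast
  then show ?thesis by (simp add: orthogonal_def)
qed

text \<open>The three edge functionals \<open>x \<mapsto> x \<bullet> (v - p)\<close> form an injective, hence surjective,
  linear map \<open>\<real>\<^sup>3 \<rightarrow> \<real>\<^sup>3\<close>.\<close>
lemma tetrahedron_edge_equations_solvable:
  assumes T: "tetrahedron T" and pT: "p \<in> T"
  shows "\<exists>c. \<forall>v\<in>T - {p}. c \<bullet> (v - p) = b v"
proof -
  have "finite T" using T by (metis card.infinite tetrahedron_def zero_neq_numeral)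
  then have "card (T - {p}) = 3" "finite (T - {p})" using T pT by (auto simp: tetrahedron_def)
  then obtain g :: "3 \<Rightarrow> point" where g: "bij_betw g UNIV (T - {p})"
    using finite_same_card_bij[of "UNIV :: 3 set" "T - {p}"] by auto
  define F :: "point \<Rightarrow> point" where "F = (\<lambda>x. \<chi> i. x \<bullet> (g i - p))"
  have lin: "linear F"
    by (rule linearI) (auto simp: F_def vec_eq_iff inner_add_left)
  have "inj F"
  proof (rule injI)
    fix x y assume "F x = F y"
    then have "(x - y) \<bullet> (g i - p) = 0" for i
      by (auto simp: F_def vec_eq_iff inner_diff_left)
    then have "(x - y) \<bullet> (v - p) = 0" if "v \<in> T" for v
      using that g by (cases "v = p") (auto simp: bij_betw_def image_iff dest: equalityD2)
    then have "x - y = 0" by (rule orthogonal_tetrahedron_edges_eq_0[OF T pT])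
    then show "x = y" by simp
  qed
  then obtain c where "F c = (\<chi> i. b (g i))"
    using linear_injective_imp_surjective[OF lin] by (metis surjD)
  then have "c \<bullet> (g i - p) = b (g i)" for i by (auto simp: F_def vec_eq_iff)
  then show ?thesis using g by (metis bij_betw_inv_into_right)
qed

lemma dist_eq_iff_inner:
  fixes c v p :: "'a::real_inner"
  shows "dist c v = dist c p \<longleftrightarrow> c \<bullet> (v - p) = (v \<bullet> v - p \<bullet> p) / 2"
proof -
  have "dist c v = dist c p \<longleftrightarrow> (dist c v)\<^sup>2 = (dist c p)\<^sup>2" by (simp add: power2_eq_iff_nonneg)
  then show ?thesis
    by (auto simp: dist_norm power2_norm_eq_inner inner_diff_left inner_diff_right
        inner_commute algebra_simps)
qed

lemma circumradius_eqI:
  assumes T: "tetrahedron T" and c: "\<forall>v\<in>T. dist c v = R"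
  shows "circumradius T = R"
  unfolding circumradius_def
proof (rule the_equality)
  show "\<exists>c. \<forall>v\<in>T. dist c v = R" using c by blast
next
  fix R' assume "\<exists>c. \<forall>v\<in>T. dist c v = R'"
  then obtain c' where c': "\<forall>v\<in>T. dist c' v = R'" by blast
  obtain p where pT: "p \<in> T" using T by (force simp: tetrahedron_def)
  have "(c' - c) \<bullet> (v - p) = 0" if "v \<in> T" for v
    using c c' that pT dist_eq_iff_inner[of c v p] dist_eq_iff_inner[of c' v p]
    by (simp add: inner_diff_left)
  then have "c' - c = 0" by (rule orthogonal_tetrahedron_edges_eq_0[OF T pT])
  then show "R' = R" using c c' pT by force
qed

lemma tetrahedron_circumcenter:
  assumes T: "tetrahedron T"
  obtains c where "\<And>v. v \<in> T \<Longrightarrow> dist c v = circumradius T"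
proof -
  obtain p where pT: "p \<in> T" using T by (force simp: tetrahedron_def)
  obtain c where "\<forall>v\<in>T - {p}. c \<bullet> (v - p) = (v \<bullet> v - p \<bullet> p) / 2"
    using tetrahedron_edge_equations_solvable[OF T pT, of "\<lambda>v. (v \<bullet> v - p \<bullet> p) / 2"] by blast
  then have "\<forall>v\<in>T. dist c v = dist c p" using dist_eq_iff_inner by blast
  then show ?thesis using that circumradius_eqI[OF T] by metis
qed

lemma ball_subset_slab_width:
  fixes w :: "'a::euclidean_space"
  assumes sub: "ball c r \<subseteq> {x. a \<le> w \<bullet> x \<and> w \<bullet> x \<le> b}" and r: "0 < r"
  shows "2 * r * norm w \<le> b - a"
proof (cases "w = 0")
  case False
  have "closed {x. a \<le> w \<bullet> x \<and> w \<bullet> x \<le> b}"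
    using closed_Int[OF closed_halfspace_ge closed_halfspace_le] by (simp add: Collect_conj_eq)
  then have cb: "cball c r \<subseteq> {x. a \<le> w \<bullet> x \<and> w \<bullet> x \<le> b}"
    using closure_minimal[OF sub] r by simp
  define e where "e = (r / norm w) *\<^sub>R w"
  have "norm e = r" using r False by (simp add: e_def)
  then have "c + e \<in> cball c r" "c - e \<in> cball c r" by (auto simp: dist_norm)
  then have "w \<bullet> (c + e) \<le> b" "a \<le> w \<bullet> (c - e)" using cb by blast+
  moreover have "w \<bullet> e = r * norm w"
    using False by (simp add: e_def power2_norm_eq_inner[symmetric] power2_eq_square)
  ultimately show ?thesis by (simp add: inner_add_right inner_diff_right)
next
  case True
  then show ?thesis using sub r centre_in_ball by fastforce
qed

lemma tetrahedron_opposite_face_functional: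
  assumes T: "tetrahedron T" and pT: "p \<in> T"
  obtains w k where "w \<bullet> p = k + 1" and "\<And>x. x \<in> affine hull (T - {p}) \<Longrightarrow> w \<bullet> x = k"
proof -
  have ind: "\<not> affine_dependent T" and c4: "card T = 4" using T by (auto simp: tetrahedron_def)
  have "card (T - {p}) = 3" using c4 pT by (simp add: card.infinite)
  moreover have "\<not> affine_dependent (T - {p})" using ind affine_independent_subset by blast
  ultimately have "aff_dim (T - {p}) = 2" using aff_dim_affine_independent by fastforce
  then obtain w k where ah: "affine hull (T - {p}) = {x. w \<bullet> x = k}"
    using aff_dim_eq_hyperplane[of "T - {p}"] by auto
  define \<delta> where "\<delta> = w \<bullet> p - k"
  have "p \<notin> affine hull (T - {p})" using ind pT by (auto simp: affine_dependent_def)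
  then have "\<delta> \<noteq> 0" using ah by (auto simp: \<delta>_def)
  then have "inverse \<delta> * (w \<bullet> p) = k / \<delta> + 1"
    by (simp add: \<delta>_def field_simps)
  moreover have "inverse \<delta> * (w \<bullet> x) = k / \<delta>" if "x \<in> affine hull (T - {p})" for x
    using that ah by (simp add: divide_inverse mult.commute)
  ultimately show ?thesis using that[of "w /\<^sub>R \<delta>" "k / \<delta>"] by simp
qed

text \<open>The tetrahedron lies in the slab between the face opposite to \<open>p\<close> and the parallel
  plane through \<open>p\<close>, whose width is at most \<open>|pp'|\<close>.\<close>
lemma tetrahedron_inball_le_height:
  assumes T: "tetrahedron T" and pT: "p \<in> T" and p': "p' \<in> convex hull (T - {p})"
    and ball: "ball c r \<subseteq> convex hull T"
  shows "2 * r \<le> dist p p'"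
proof (cases "0 < r")
  case True
  obtain w k where wp: "w \<bullet> p = k + 1" and face: "\<And>x. x \<in> affine hull (T - {p}) \<Longrightarrow> w \<bullet> x = k"
    using tetrahedron_opposite_face_functional[OF T pT] by blast
  have "w \<bullet> p' = k" using face p' convex_hull_subset_affine_hull by blast
  then have "1 = w \<bullet> (p - p')" using wp by (simp add: inner_diff_right)
  also have "\<dots> \<le> norm w * dist p p'" by (metis norm_cauchy_schwarz dist_norm)
  finally have height: "1 \<le> norm w * dist p p'" .
  have "T \<subseteq> {x. k \<le> w \<bullet> x \<and> w \<bullet> x \<le> k + 1}"
    using wp face hull_inc[of _ "T - {p}"] by fastforce
  then have "convex hull T \<subseteq> {x. k \<le> w \<bullet> x \<and> w \<bullet> x \<le> k + 1}"
    by (intro hull_minimal)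
       (auto simp: Collect_conj_eq intro: convex_Int convex_halfspace_ge convex_halfspace_le)
  then have "2 * r * norm w \<le> 1" using ball_subset_slab_width[OF _ True] ball by fastforce
  then have "norm w * (2 * r) \<le> norm w * dist p p'" using height by (simp add: mult_ac)
  moreover have "0 < norm w" using height by (cases "w = 0") auto
  ultimately show ?thesis by simp
qed (use zero_le_dist[of p p'] in linarith)

lemma inradius_le:
  assumes "\<And>c r. ball c r \<subseteq> convex hull T \<Longrightarrow> r \<le> B"
  shows "inradius T \<le> B"
proof -
  have "ball 0 0 \<subseteq> convex hull T" by simp
  then show ?thesis unfolding inradius_def using assms by (intro cSup_least) blast+
qed

lemma tetrahedron_inradius_pos:
  assumes T: "tetrahedron T"
  shows "0 < inradius T"
proof -
  obtain p where pT: "p \<in> T" using T by (force simp: tetrahedron_def)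
  have "card (T - {p}) = 3" using T pT by (simp add: tetrahedron_def card.infinite)
  then obtain v where "v \<in> T - {p}" by (metis all_not_in_conv card.empty zero_neq_numeral)
  then have p': "v \<in> convex hull (T - {p})" by (rule hull_inc)
  have "r \<le> dist p v / 2" if "ball c r \<subseteq> convex hull T" for c r
    using tetrahedron_inball_le_height[OF T pT p' that] by simp
  then have bdd: "bdd_above {r. \<exists>c. ball c r \<subseteq> convex hull T}"
    by (intro bdd_aboveI[of _ "dist p v / 2"]) blast
  have "interior (convex hull T) \<noteq> {}"
    using T interior_convex_hull_eq_empty[of T] by (simp add: tetrahedron_def)
  then obtain e c where "e > 0" "ball c e \<subseteq> convex hull T"
    by (meson ex_in_conv interior_subset open_contains_ball_eq open_interior subset_trans)
  then show ?thesis unfolding inradius_def using bdd by (fastforce intro: less_le_trans cSup_upper)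
qed

lemma tetrahedron_inradius_le_height:
  assumes "tetrahedron T" "p \<in> T" "p' \<in> convex hull (T - {p})"
  shows "2 * inradius T \<le> dist p p'"
  using inradius_le[of T "dist p p' / 2"] tetrahedron_inball_le_height[OF assms] by fastforce

text \<open>\<open>x \<mapsto> |xq|\<^sup>2 - |xc|\<^sup>2\<close> is affine, so a lower bound on \<open>S\<close> persists on its convex hull.\<close>
lemma convex_hull_power_difference_ge:
  fixes c q :: "'a::real_inner"
  assumes circ: "\<And>v. v \<in> S \<Longrightarrow> dist v c = R" and far: "\<And>v. v \<in> S \<Longrightarrow> d \<le> dist v q"
    and d: "0 \<le> d" and x: "x \<in> convex hull S"
  shows "d\<^sup>2 - R\<^sup>2 \<le> (dist x q)\<^sup>2 - (dist x c)\<^sup>2"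
proof -
  have affine: "(dist y q)\<^sup>2 - (dist y c)\<^sup>2 = 2 * ((c - q) \<bullet> y) + (q \<bullet> q - c \<bullet> c)" for y
    by (simp add: dist_norm power2_norm_eq_inner inner_diff_left inner_diff_right
        inner_commute algebra_simps)
  define K where "K = (d\<^sup>2 - R\<^sup>2 - (q \<bullet> q - c \<bullet> c)) / 2"
  have "S \<subseteq> {y. K \<le> (c - q) \<bullet> y}"
  proof
    fix v assume v: "v \<in> S"
    have "d\<^sup>2 \<le> (dist v q)\<^sup>2" using far[OF v] d by (simp add: power_mono)
    then show "v \<in> {y. K \<le> (c - q) \<bullet> y}" using affine[of v] circ[OF v] by (simp add: K_def)
  qed
  moreover have "convex {y. K \<le> (c - q) \<bullet> y}" by (rule convex_halfspace_ge)
  ultimately have "K \<le> (c - q) \<bullet> x" using x hull_minimal by blast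
  then show ?thesis using affine[of x] by (simp add: K_def)
qed

lemma height_lower_bound_arith:
  fixes d t r R \<rho> :: real
  assumes "0 \<le> \<rho>" "0 < r" "2 * r \<le> t" "0 \<le> R" "R < \<rho> * r" "2 * d * t - t\<^sup>2 \<le> R\<^sup>2"
  shows "6 / (\<rho>\<^sup>2 + 3) * d < t"
proof -
  have "R\<^sup>2 < (\<rho> * r)\<^sup>2" using assms by (simp add: power_strict_mono)
  also have "\<dots> \<le> (\<rho> * (t / 2))\<^sup>2" using assms by (intro power_mono mult_left_mono) auto
  finally have "2 * d * t < t * (t * (1 + \<rho>\<^sup>2 / 4))"
    using assms by (simp add: power2_eq_square algebra_simps)
  then have "2 * d < t * (1 + \<rho>\<^sup>2 / 4)" using assms by simp
  then have "6 * d < 3 * t * (1 + \<rho>\<^sup>2 / 4)" by simp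
  also have "\<dots> \<le> t * (\<rho>\<^sup>2 + 3)" using assms by (simp add: algebra_simps)
  finally have "6 * d < t * (\<rho>\<^sup>2 + 3)" .
  moreover have "0 < \<rho>\<^sup>2 + 3" by (simp add: add_nonneg_pos)
  ultimately show ?thesis by (simp add: divide_less_eq mult.commute)
qed

theorem mainTheorem16:
  fixes M :: "point set set" and \<rho> :: real and q p p' :: point and \<tau> :: "point set"
  assumes ws: "well_shaped \<rho> M"
    and q_in: "q \<in> mesh_region M"
    and p_vert: "p \<in> mesh_vertices M"
    and p_nearest: "\<forall>v\<in>mesh_vertices M. dist p q \<le> dist v q"
    and tau_in: "\<tau> \<in> M"
    and p_tau: "p \<in> \<tau>"
    and tau_first: "\<exists>\<epsilon>>0. \<forall>s\<in>{0..\<epsilon>}. p + s *\<^sub>R (q - p) \<in> convex hull \<tau>"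
    and q_not_int: "q \<notin> interior (convex hull \<tau>)"
    and p'_seg: "p' \<in> closed_segment p q"
    and p'_face: "p' \<in> convex hull (\<tau> - {p})"
  shows "dist p p' > 6 / (\<rho>\<^sup>2 + 3) * dist p q"
proof -
  have tet: "tetrahedron \<tau>" and \<rho>: "\<rho> \<ge> 3" and ratio: "circumradius \<tau> / inradius \<tau> < \<rho>"
    using ws tau_in by (auto simp: well_shaped_def tet_mesh_def)
  obtain c where c: "\<And>v. v \<in> \<tau> \<Longrightarrow> dist c v = circumradius \<tau>"
    using tetrahedron_circumcenter[OF tet] by blast
  have r: "0 < inradius \<tau>" using tetrahedron_inradius_pos[OF tet] .
  have "(dist p q)\<^sup>2 - (circumradius \<tau>)\<^sup>2 \<le> (dist p' q)\<^sup>2 - (dist p' c)\<^sup>2"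
    using tau_in p_nearest c
    by (intro convex_hull_power_difference_ge[OF _ _ _ p'_face])
       (auto simp: mesh_vertices_def dist_commute)
  moreover have "dist p' q = dist p q - dist p p'"
    using p'_seg between_mem_segment between by (metis add_diff_cancel_left')
  ultimately have "2 * dist p q * dist p p' - (dist p p')\<^sup>2 \<le> (circumradius \<tau>)\<^sup>2"
    by (smt (verit) power2_diff zero_le_power2)
  then show ?thesis
    using \<rho> r ratio c[OF p_tau] zero_le_dist[of c p] tetrahedron_inradius_le_height[OF tet p_tau p'_face]
    by (intro height_lower_bound_arith[of \<rho> "inradius \<tau>" _ "circumradius \<tau>"])
       (auto simp: pos_divide_less_eq)
qed

end
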